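(* Let $k\geq 2$ be an integer, let $\Psi_k(x) = x^k - 2x^{k-1} - x^{k-2} - \cdots - x - 1$, and let $\gamma = \gamma_1, \gamma_2, \ldots, \gamma_k$ be the roots of $\Psi_k$, labeled so that $\gamma > |\gamma_2| \geq |\gamma_3| \geq \cdots \geq |\gamma_k|$, where $\gamma$ is the unique root of $\Psi_k$ outside the unit circle (it is real and $\gamma>1$). Let $$g_k(z) = \frac{z-1}{k(z^2-3z+1) + z^2 - 1} = \frac{z-1}{(k+1)z^2 - 3kz + k - 1}.$$ Then: (i) if $\gamma_i,\gamma_j$ are roots of $\Psi_k$ with $|\gamma_i| > |\gamma_j|$, then $\dfrac{|\gamma_i|}{|\gamma_j|} > 1 + 1.59^{-k^3}$; (ii) $0.276 \leq g_k(\gamma) \leq 0.5$; (iii) for all $2 \leq i \leq k$, $|g_k(\gamma_i)| < \min\{1, \tfrac{2}{k-2}\}$; (iv) $|\gamma_k| < 1 - \dfrac{\log\gamma}{2k}$ and $|g_k(\gamma_k)| > \dfrac{\log \gamma}{2k(5k+2)}$; (v) if $\gamma_i, \gamma_j$ are distinct roots of $\Psi_k$ with $|\gamma_i| = |\gamma_j|$, then $\gamma_j = \overline{\gamma_i}$.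
   Context: It is known that $\Psi_k$ is irreducible over $\mathbb{Q}$ and has exactly one root outside the unit circle, which is real and greater than $1$; all other roots lie strictly inside the unit circle. $\log$ denotes the natural logarithm. *)

theory Defs
  imports "HOL-Analysis.Analysis" "HOL-Computational_Algebra.Polynomial"
begin

definition Psi :: "nat \<Rightarrow> complex poly" where
  "Psi k = monom 1 k - smult 2 (monom 1 (k - 1)) - (\<Sum>i<k - 1. monom 1 i)"

definition g :: "nat \<Rightarrow> 'a::field \<Rightarrow> 'a" where
  "g k z = (z - 1) / ((of_nat k + 1) * z ^ 2 - 3 * of_nat k * z + of_nat k - 1)"

end

theory Submission
  imports Defs "HOL-Computational_Algebra.Fundamental_Theorem_Algebra"
begin

(*
  Write k = n + 1. Multiplying by z - 1, the roots of Psi_k are the solutions z <> 1 of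
  Q n z = z^n (z^2 - 3z + 1) + 1 = 0. Taking squared moduli, |z|^(2n) |z^2 - 3z + 1|^2 = 1,
  and for fixed |z| = r the factor |z^2 - 3z + 1|^2 is a strictly decreasing function of
  Re z on [-r, r]. Hence two roots of equal modulus have equal real part, so they coincide
  or are conjugate: this is (v), and together with the monotonicity of Psi_k(r)/r^k on
  r > 0 it shows that all roots other than gamma lie in the open unit disk, and that
  2 < gamma < 2.6181.

  Since (k+1) z^2 - 3kz + k - 1 = k (z^2 - 3z + 1) + z^2 - 1 and |z^2 - 3z + 1| = |z|^(-n),
  the denominator of g_k at a root of modulus below 1 has modulus between k/|z|^n - 2 and
  5k + 2; (ii)-(iv) follow, (iv) using that the moduli of all roots multiply to |Psi_k(0)| = 1.

  For (i), suppose two inner roots have moduli with ratio at most 1 + 1.59^(-k^3).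
  Quantifying the monotonicity above, their real parts differ by O(k) times the difference
  of squared moduli, so after reflecting both into the upper half plane the two roots are
  within O(k^2 1.59^(-k^3)) of each other. But a second-order Taylor expansion of Q n,
  whose derivative has modulus at least n - 1 at inner roots, shows that distinct inner
  roots are at distance at least 1/(5k) when k >= 4; the cases k = 2, 3 are explicit.
*)

section \<open>The characteristic equation\<close>

(* Psi k as a polynomial function on any commutative ring, so that it can also be evaluated on the reals. *)
definition psi :: "nat \<Rightarrow> 'a::comm_ring_1 \<Rightarrow> 'a" where
  "psi k z = z ^ k - 2 * z ^ (k - 1) - (\<Sum>i<k - 1. z ^ i)"

definition Q :: "nat \<Rightarrow> 'a::comm_ring_1 \<Rightarrow> 'a" where
  "Q n z = z ^ n * (z\<^sup>2 - 3 * z + 1) + 1"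

lemma poly_Psi: "poly (Psi k) z = psi k z"
  by (simp add: Psi_def psi_def poly_monom poly_sum)

lemma psi_of_real: "psi k (complex_of_real r) = complex_of_real (psi k r)"
  by (simp add: psi_def)

lemma Q_of_real: "Q n (complex_of_real r) = complex_of_real (Q n r)"
  by (simp add: Q_def)

lemma psi_cnj: "psi k (cnj z) = cnj (psi k z)"
  by (simp add: psi_def)

lemma Q_cnj: "Q n (cnj z) = cnj (Q n z)"
  by (simp add: Q_def)

lemma psi_Suc_mult: "(z - 1) * psi (Suc n) z = Q n z"
proof -
  have "(z - 1) * (\<Sum>i<n. z ^ i) = z ^ n - 1"
    by (simp add: power_diff_1_eq)
  then show ?thesis
    by (simp add: psi_def Q_def algebra_simps power2_eq_square)
qed

lemma psi_Suc_eq_0_iff: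
  fixes z :: "'a::{idom,ring_char_0}"
  shows "psi (Suc n) z = 0 \<longleftrightarrow> Q n z = 0 \<and> z \<noteq> 1"
proof -
  have "psi (Suc n) (1::'a) = - of_nat (Suc n)"
    by (simp add: psi_def)
  then have "psi (Suc n) (1::'a) \<noteq> 0"
    by (simp only: neg_equal_0_iff_equal of_nat_eq_0_iff)
  then show ?thesis
    using psi_Suc_mult[of z n] by (cases "z = 1") auto
qed

lemma Q_eq_0_nonzero:
  fixes z :: "'a::{comm_ring_1,ring_char_0}"
  assumes "Q n z = 0"
  shows "z \<noteq> 0"
  using assms by (cases n) (auto simp: Q_def)

lemma coeff_Psi:
  "coeff (Psi k) j = (if j = k then 1 else 0) - 2 * (if j = k - 1 then 1 else 0) - (if j < k - 1 then 1 else 0)"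
  by (simp add: Psi_def coeff_sum coeff_monom)

lemma degree_Psi: "degree (Psi (Suc n)) = Suc n"
  by (rule antisym, rule degree_le) (auto simp: coeff_Psi intro: le_degree)

lemma lead_coeff_Psi: "lead_coeff (Psi (Suc n)) = 1"
  by (simp add: degree_Psi coeff_Psi)

lemma psi_3_eq: "psi 3 x = x ^ 3 - 2 * x\<^sup>2 - x - 1"
  by (simp add: psi_def numeral_2_eq_2)

section \<open>Roots of equal modulus\<close>

definition qnorm2 :: "real \<Rightarrow> real \<Rightarrow> real" where
  "qnorm2 x R = 4 * x\<^sup>2 - 6 * (R + 1) * x + R\<^sup>2 + 7 * R + 1"

lemma cmod_q_power2: "(cmod (z\<^sup>2 - 3 * z + 1))\<^sup>2 = qnorm2 (Re z) ((cmod z)\<^sup>2)"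
proof -
  obtain x y where z: "z = Complex x y"
    by (cases z)
  have "(cmod (z\<^sup>2 - 3 * z + 1))\<^sup>2 = (x\<^sup>2 - y\<^sup>2 - 3 * x + 1)\<^sup>2 + (2 * x * y - 3 * y)\<^sup>2"
    unfolding cmod_power2 z by (simp add: power2_eq_square algebra_simps)
  also have "\<dots> = qnorm2 x (x\<^sup>2 + y\<^sup>2)"
    by (simp add: qnorm2_def power2_eq_square algebra_simps)
  finally show ?thesis
    by (simp add: z cmod_power2)
qed

lemma qnorm2_diff_Re: "qnorm2 x\<^sub>1 R - qnorm2 x\<^sub>2 R = (x\<^sub>1 - x\<^sub>2) * (4 * (x\<^sub>1 + x\<^sub>2) - 6 * (R + 1))"
  by (simp add: qnorm2_def power2_eq_square algebra_simps)

lemma qnorm2_diff_R: "qnorm2 x R\<^sub>1 - qnorm2 x R\<^sub>2 = (R\<^sub>1 - R\<^sub>2) * (R\<^sub>1 + R\<^sub>2 + 7 - 6 * x)"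
  by (simp add: qnorm2_def power2_eq_square algebra_simps)

lemma qnorm2_inj_Re:
  assumes "\<bar>x\<^sub>1\<bar> \<le> r" "\<bar>x\<^sub>2\<bar> \<le> r" "qnorm2 x\<^sub>1 (r\<^sup>2) = qnorm2 x\<^sub>2 (r\<^sup>2)"
  shows "x\<^sub>1 = x\<^sub>2"
proof -
  have "4 * (x\<^sub>1 + x\<^sub>2) \<le> 8 * r"
    using assms(1,2) by (auto simp: abs_le_iff)
  moreover have "8 * r < 6 * (r\<^sup>2 + 1)"
    using zero_le_power2[of "r - 2/3"] by (simp add: power2_eq_square algebra_simps)
  ultimately show ?thesis
    using assms(3) qnorm2_diff_Re[of x\<^sub>1 "r\<^sup>2" x\<^sub>2] by simp
qed

lemma Q_eq_0_norm:
  fixes z :: complex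
  assumes "Q n z = 0"
  shows "cmod z ^ n * cmod (z\<^sup>2 - 3 * z + 1) = 1"
proof -
  have "z ^ n * (z\<^sup>2 - 3 * z + 1) = -1"
    using assms by (simp add: Q_def eq_neg_iff_add_eq_0)
  then show ?thesis
    by (metis norm_minus_cancel norm_mult norm_one norm_power)
qed

lemma Q_eq_0_qnorm2:
  fixes z :: complex
  assumes "Q n z = 0"
  shows "((cmod z)\<^sup>2) ^ n * qnorm2 (Re z) ((cmod z)\<^sup>2) = 1"
proof -
  have "(cmod z ^ n * cmod (z\<^sup>2 - 3 * z + 1))\<^sup>2 = 1"
    using Q_eq_0_norm[OF assms] by simp
  then show ?thesis
    unfolding power_mult_distrib cmod_q_power2 by (simp add: power_mult_distrib mult.commute flip: power_mult)
qed

lemma Q_eq_0_same_norm_Re: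
  fixes z w :: complex
  assumes "Q n z = 0" "Q n w = 0" "cmod z = cmod w"
  shows "Re z = Re w"
proof (rule qnorm2_inj_Re)
  show "\<bar>Re z\<bar> \<le> cmod z" "\<bar>Re w\<bar> \<le> cmod z"
    using assms(3) abs_Re_le_cmod by metis+
  have "((cmod z)\<^sup>2) ^ n * qnorm2 (Re z) ((cmod z)\<^sup>2) = ((cmod z)\<^sup>2) ^ n * qnorm2 (Re w) ((cmod z)\<^sup>2)"
    using Q_eq_0_qnorm2[OF assms(1)] Q_eq_0_qnorm2[OF assms(2)] assms(3) by simp
  moreover have "((cmod z)\<^sup>2) ^ n \<noteq> 0"
    using Q_eq_0_qnorm2[OF assms(1)] by (metis mult_zero_left zero_neq_one)
  ultimately show "qnorm2 (Re z) ((cmod z)\<^sup>2) = qnorm2 (Re w) ((cmod z)\<^sup>2)"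
    by (metis mult_left_cancel)
qed

lemma Q_eq_0_same_norm:
  fixes z w :: complex
  assumes "Q n z = 0" "Q n w = 0" "cmod z = cmod w"
  shows "w = z \<or> w = cnj z"
proof -
  have Re: "Re w = Re z"
    using Q_eq_0_same_norm_Re[OF assms] by simp
  then have "(Im w)\<^sup>2 = (Im z)\<^sup>2"
    using assms(3) cmod_power2[of w] cmod_power2[of z] Re by simp
  then have "Im w = Im z \<or> Im w = - Im z"
    by (simp add: power2_eq_iff)
  then show ?thesis
    using Re by (auto simp: complex_eq_iff)
qed

lemma psi_Suc_roots_same_norm:
  fixes z w :: complex
  assumes "psi (Suc n) z = 0" "psi (Suc n) w = 0" "z \<noteq> w" "cmod z = cmod w"
  shows "w = cnj z"
  using Q_eq_0_same_norm[of n z w] assms psi_Suc_eq_0_iff by blast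

section \<open>Psi on the reals, and the cubic Psi 3\<close>

lemma psi_Suc_div_power:
  fixes r :: real
  assumes "r > 0"
  shows "psi (Suc n) r / r ^ Suc n = 1 - 2 / r - (\<Sum>i<n. 1 / r ^ (Suc n - i))"
proof -
  have "r ^ i / r ^ Suc n = 1 / r ^ (Suc n - i)" if "i < n" for i
    using assms that by (simp add: power_diff)
  then have "(\<Sum>i<n. r ^ i) / r ^ Suc n = (\<Sum>i<n. 1 / r ^ (Suc n - i))"
    by (simp add: sum_divide_distrib)
  moreover have "r ^ n / r ^ Suc n = 1 / r"
    using assms by simp
  ultimately show ?thesis
    using assms by (simp add: psi_def diff_divide_distrib)
qed

lemma psi_Suc_div_power_strict_mono: "strict_mono_on {0<..} (\<lambda>r::real. psi (Suc n) r / r ^ Suc n)"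
proof (rule strict_mono_onI)
  fix r s :: real
  assume "r \<in> {0<..}" "s \<in> {0<..}" "r < s"
  then have rs: "0 < r" "r < s"
    by auto
  have "(\<Sum>i<n. 1 / s ^ (Suc n - i)) \<le> (\<Sum>i<n. 1 / r ^ (Suc n - i))"
    using rs by (intro sum_mono divide_left_mono power_mono) auto
  moreover have "2 / s < 2 / r"
    using rs by (simp add: divide_strict_left_mono)
  ultimately show "psi (Suc n) r / r ^ Suc n < psi (Suc n) s / s ^ Suc n"
    using psi_Suc_div_power[of r n] psi_Suc_div_power[of s n] rs by simp
qed

lemma
  fixes r \<gamma> :: real
  assumes "psi (Suc n) \<gamma> = 0" "\<gamma> > 0" "r > 0"
  shows psi_Suc_less_0_iff: "psi (Suc n) r < 0 \<longleftrightarrow> r < \<gamma>"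
    and psi_Suc_le_0_iff: "psi (Suc n) r \<le> 0 \<longleftrightarrow> r \<le> \<gamma>"
proof -
  let ?f = "\<lambda>r::real. psi (Suc n) r / r ^ Suc n"
  have "?f \<gamma> = 0"
    using assms(1) by simp
  moreover have "psi (Suc n) r < 0 \<longleftrightarrow> ?f r < 0" "psi (Suc n) r \<le> 0 \<longleftrightarrow> ?f r \<le> 0"
    using assms(3) pos_divide_less_eq[of "r ^ Suc n" _ 0] pos_divide_le_eq[of "r ^ Suc n" _ 0] by simp_all
  moreover have "?f r < ?f \<gamma> \<longleftrightarrow> r < \<gamma>" "?f r \<le> ?f \<gamma> \<longleftrightarrow> r \<le> \<gamma>"
    using assms(2,3) strict_mono_on_less[OF psi_Suc_div_power_strict_mono[of n]]
      strict_mono_on_less_eq[OF psi_Suc_div_power_strict_mono[of n]] by auto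
  ultimately show "psi (Suc n) r < 0 \<longleftrightarrow> r < \<gamma>" "psi (Suc n) r \<le> 0 \<longleftrightarrow> r \<le> \<gamma>"
    by auto
qed

lemma psi_Suc_norm_root_le_0:
  fixes z :: complex
  assumes "psi (Suc n) z = 0"
  shows "psi (Suc n) (cmod z) \<le> 0"
proof -
  have "z ^ Suc n = 2 * z ^ n + (\<Sum>i<n. z ^ i)"
    using assms by (simp add: psi_def algebra_simps)
  then have "cmod z ^ Suc n = cmod (2 * z ^ n + (\<Sum>i<n. z ^ i))"
    by (metis norm_power)
  also have "\<dots> \<le> 2 * cmod z ^ n + (\<Sum>i<n. cmod z ^ i)"
    by (rule norm_triangle_le, rule add_mono) (auto simp: norm_mult norm_power intro: norm_sum[THEN order_trans])
  finally show ?thesis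
    by (simp add: psi_def)
qed

lemma Q_norm_root_ge_0:
  fixes z :: complex
  assumes "Q n z = 0"
  shows "Q n (cmod z) \<ge> 0"
proof -
  have "3 * z ^ Suc n = z ^ (n + 2) + z ^ n + 1"
    using assms by (simp add: Q_def algebra_simps power2_eq_square)
  then have "3 * cmod z ^ Suc n = cmod (z ^ (n + 2) + z ^ n + 1)"
    by (metis norm_mult norm_numeral norm_power)
  also have "\<dots> \<le> cmod z ^ (n + 2) + cmod z ^ n + 1"
    by (intro norm_triangle_le add_mono) (simp_all add: norm_power del: power_Suc)
  finally show ?thesis
    by (simp add: Q_def algebra_simps power2_eq_square)
qed

lemma psi_3_no_root_in_unit_interval:
  fixes x :: real
  assumes "\<bar>x\<bar> < 1"
  shows "psi 3 x \<noteq> 0"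
proof -
  have "x\<^sup>2 \<le> 1"
    using assms by (simp add: abs_square_le_1)
  then have "\<bar>x\<^sup>2 - 1\<bar> \<le> 1"
    by (simp add: abs_le_iff)
  then have "x * (x\<^sup>2 - 1) \<le> \<bar>x\<bar>"
    using abs_ge_self[of "x * (x\<^sup>2 - 1)"] mult_left_le[of "\<bar>x\<^sup>2 - 1\<bar>" "\<bar>x\<bar>"] by (simp add: abs_mult)
  moreover have "psi 3 x = x * (x\<^sup>2 - 1) - 2 * x\<^sup>2 - 1"
    by (simp add: psi_3_eq power3_eq_cube power2_eq_square algebra_simps)
  ultimately have "psi 3 x < 0"
    using assms zero_le_power2[of x] by linarith
  then show ?thesis
    by simp
qed

lemma psi_3_other_root:
  fixes w u :: "'a::idom"
  assumes "psi 3 w = 0" "psi 3 u = 0" "w \<noteq> u"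
  shows "w\<^sup>2 + w * u + u\<^sup>2 - 2 * (w + u) - 1 = 0"
proof -
  have "(w - u) * (w\<^sup>2 + w * u + u\<^sup>2 - 2 * (w + u) - 1) = psi 3 w - psi 3 u"
    by (simp add: psi_3_eq algebra_simps power2_eq_square power3_eq_cube)
  then show ?thesis
    using assms by simp
qed

lemma psi_3_nonreal_root_norm:
  fixes z :: complex and r :: real
  assumes "psi 3 z = 0" "Im z \<noteq> 0" "psi 3 r = 0"
  shows "r * (cmod z)\<^sup>2 = 1"
proof -
  define G where "G = complex_of_real r"
  have G: "psi 3 G = 0"
    using assms(3) by (simp add: G_def psi_of_real)
  have "z \<noteq> G" "cnj z \<noteq> G" "z \<noteq> cnj z"
    using assms(2) by (auto simp: G_def complex_eq_iff)
  moreover have "psi 3 (cnj z) = 0"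
    using assms(1) by (simp add: psi_cnj)
  ultimately have quad_z: "z\<^sup>2 + z * G + G\<^sup>2 - 2 * (z + G) - 1 = 0"
    and quad_cnj: "(cnj z)\<^sup>2 + cnj z * G + G\<^sup>2 - 2 * (cnj z + G) - 1 = 0"
    using psi_3_other_root assms(1) G by blast+
  have "(z - cnj z) * (z + cnj z + G - 2)
      = (z\<^sup>2 + z * G + G\<^sup>2 - 2 * (z + G) - 1) - ((cnj z)\<^sup>2 + cnj z * G + G\<^sup>2 - 2 * (cnj z + G) - 1)"
    by (simp add: algebra_simps power2_eq_square)
  also have "\<dots> = 0"
    unfolding quad_z quad_cnj by simp
  finally have sum: "z + cnj z + G - 2 = 0"
    using \<open>z \<noteq> cnj z\<close> by (metis mult_eq_0_iff right_minus_eq)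
  have "z * cnj z
      = (G\<^sup>2 - 2 * G - 1) - (z\<^sup>2 + z * G + G\<^sup>2 - 2 * (z + G) - 1) + z * (z + cnj z + G - 2)"
    by (simp add: algebra_simps power2_eq_square)
  then have "z * cnj z = G\<^sup>2 - 2 * G - 1"
    unfolding quad_z sum by simp
  moreover have "complex_of_real (r * (cmod z)\<^sup>2) = G * (z * cnj z)"
    by (simp only: G_def of_real_mult complex_norm_square)
  moreover have "G * (G\<^sup>2 - 2 * G - 1) = 1"
    using G by (simp add: psi_3_eq algebra_simps power2_eq_square power3_eq_cube)
  ultimately show ?thesis
    by (metis of_real_eq_1_iff)
qed

lemma g_eq: "g k z = (z - 1) / (of_nat k * (z\<^sup>2 - 3 * z + 1) + (z\<^sup>2 - 1))"
  by (simp add: g_def algebra_simps)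

lemma norm_q_le_5:
  fixes z :: complex
  assumes "cmod z \<le> 1"
  shows "cmod (z\<^sup>2 - 3 * z + 1) \<le> 5"
proof -
  have "cmod (z\<^sup>2 - 3 * z + 1) \<le> cmod (z\<^sup>2) + cmod (3 * z) + 1"
    using norm_triangle_ineq[of "z\<^sup>2 - 3 * z" 1] norm_triangle_ineq4[of "z\<^sup>2" "3 * z"] by simp
  also have "\<dots> \<le> 1 + 3 + 1"
    using assms power_le_one[of "cmod z" 2] by (simp add: norm_mult norm_power)
  finally show ?thesis
    by simp
qed

lemma g_denominator_bounds:
  fixes z :: complex
  assumes "Q n z = 0" "cmod z < 1"
  defines "D \<equiv> of_nat (Suc n) * (z\<^sup>2 - 3 * z + 1) + (z\<^sup>2 - 1)"
  shows "real (Suc n) / cmod z ^ n - 2 < cmod D"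
    and "real (Suc n) - 2 < cmod D"
    and "cmod D < 5 * real (Suc n) + 2"
proof -
  have z0: "z \<noteq> 0"
    using assms(1) by (rule Q_eq_0_nonzero)
  have z2: "cmod (z\<^sup>2) < 1"
    using assms(2) by (simp add: norm_power power_less_one_iff)
  have "cmod (z\<^sup>2 - 1) < 2"
    using norm_triangle_ineq4[of "z\<^sup>2" 1] z2 by simp
  moreover have "cmod (z\<^sup>2 - 3 * z + 1) = 1 / cmod z ^ n"
    using Q_eq_0_norm[OF assms(1)] z0 by (simp add: eq_divide_eq mult.commute)
  then have "cmod (of_nat (Suc n) * (z\<^sup>2 - 3 * z + 1)) = real (Suc n) / cmod z ^ n"
    by (simp only: norm_mult norm_of_nat) simp
  ultimately show lower: "real (Suc n) / cmod z ^ n - 2 < cmod D"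
    unfolding D_def using norm_diff_ineq[of "of_nat (Suc n) * (z\<^sup>2 - 3 * z + 1)" "z\<^sup>2 - 1"] by linarith
  have "real (Suc n) \<le> real (Suc n) / cmod z ^ n"
    using z0 assms(2) by (simp add: le_divide_eq power_le_one)
  then show "real (Suc n) - 2 < cmod D"
    using lower by linarith
  have "cmod (z\<^sup>2 - 3 * z + 1) \<le> 5"
    using assms(2) by (simp add: norm_q_le_5)
  then have "cmod (of_nat (Suc n) * (z\<^sup>2 - 3 * z + 1)) \<le> real (Suc n) * 5"
    unfolding norm_mult norm_of_nat by (intro mult_left_mono) auto
  then show "cmod D < 5 * real (Suc n) + 2"
    unfolding D_def using norm_triangle_ineq[of "of_nat (Suc n) * (z\<^sup>2 - 3 * z + 1)" "z\<^sup>2 - 1"]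
      \<open>cmod (z\<^sup>2 - 1) < 2\<close> by linarith
qed

lemma norm_poly_0_eq_prod_proots:
  fixes p :: "complex poly"
  shows "cmod (poly p 0) = cmod (lead_coeff p) * (\<Prod>x\<in>#proots p. cmod x)"
proof -
  have "poly p 0 = lead_coeff p * (\<Prod>x\<in>#proots p. - x)"
    by (subst complex_poly_decompose_multiset[symmetric]) (simp add: poly_prod_mset)
  moreover have "cmod (\<Prod>x\<in>#M. - x) = (\<Prod>x\<in>#M. cmod x)" for M :: "complex multiset"
    by (induction M) (simp_all add: norm_mult)
  ultimately show ?thesis
    by (simp add: norm_mult)
qed

lemma power_size_le_prod_mset:
  fixes f :: "'a \<Rightarrow> 'b::linordered_semidom"
  assumes "\<And>x. x \<in># M \<Longrightarrow> m \<le> f x" "0 \<le> m"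
  shows "m ^ size M \<le> (\<Prod>x\<in>#M. f x)"
  using assms
proof (induction M)
  case (add x M)
  then show ?case
    by (simp add: mult_mono order_trans[OF add.prems(2)])
qed simp

lemma exp_minus_less_one_minus_half:
  fixes t :: real
  assumes "0 < t" "t < 1"
  shows "exp (- t) < 1 - t / 2"
proof -
  have "exp (- t) \<le> 1 / (1 + t)"
    using assms exp_ge_add_one_self[of t] by (simp add: exp_minus inverse_eq_divide divide_left_mono)
  also have "\<dots> < 1 - t / 2"
  proof -
    have "t * t < t * 1"
      using assms by (intro mult_strict_left_mono) auto
    then have "1 < (1 + t) * (1 - t / 2)"
      by (simp add: algebra_simps)
    then show ?thesis
      using assms by (simp add: divide_less_eq mult.commute)
  qed
  finally show ?thesis .
qed

lemma exp_1_gt: "2.6181 < exp (1::real)"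
  using e_approx_32 by (simp add: abs_if split: if_split_asm)

section \<open>Separation of moduli of inner roots\<close>

lemma norm_power_taylor_remainder_le:
  fixes a b :: "'a::real_normed_field"
  assumes "norm a \<le> 1" "norm b \<le> 1"
  shows "norm (b ^ m - a ^ m - of_nat m * a ^ (m - 1) * (b - a))
    \<le> real m * (real m - 1) / 2 * (norm (b - a))\<^sup>2"
proof (induction m)
  case (Suc m)
  define E where "E = b ^ m - a ^ m - of_nat m * a ^ (m - 1) * (b - a)"
  have "b ^ Suc m - a ^ Suc m - of_nat (Suc m) * a ^ (Suc m - 1) * (b - a)
      = b * E + of_nat m * a ^ (m - 1) * (b - a)\<^sup>2"
    by (cases m) (simp_all add: E_def algebra_simps power2_eq_square)
  also have "norm \<dots> \<le> norm E + real m * (norm (b - a))\<^sup>2"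
  proof (rule norm_triangle_le, rule add_mono)
    show "norm (b * E) \<le> norm E"
      using assms(2) by (simp add: norm_mult mult_left_le_one_le)
    have "norm (a ^ (m - 1)) \<le> 1"
      using assms(1) by (simp add: norm_power power_le_one)
    then have "real m * norm (a ^ (m - 1)) * (norm (b - a))\<^sup>2 \<le> real m * 1 * (norm (b - a))\<^sup>2"
      by (intro mult_right_mono mult_left_mono) auto
    then show "norm (of_nat m * a ^ (m - 1) * (b - a)\<^sup>2) \<le> real m * (norm (b - a))\<^sup>2"
      by (simp add: norm_mult norm_power)
  qed
  also have "\<dots> \<le> real (Suc m) * (real (Suc m) - 1) / 2 * (norm (b - a))\<^sup>2"
    using Suc.IH by (simp add: E_def field_simps)
  finally show ?case .
qed simp

lemma Q_deriv_norm_ge: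
  fixes a :: "'a::real_normed_field"
  assumes "Q n a = 0" "norm a \<le> 1" "n \<ge> 1"
  shows "real n - 1
    \<le> norm (of_nat (n + 2) * a ^ (n + 1) - 3 * of_nat (n + 1) * a ^ n + of_nat n * a ^ (n - 1))"
    (is "_ \<le> norm ?Q'")
proof -
  have "a * ?Q' = a ^ n * (a\<^sup>2 - 1) + of_nat (n + 1) * Q n a - of_nat (n + 1)"
    using assms(3) by (cases n) (simp_all add: Q_def algebra_simps power2_eq_square)
  then have aQ': "a * ?Q' = a ^ n * (a\<^sup>2 - 1) - of_nat (n + 1)"
    using assms(1) by (simp add: Q_def)
  have "norm (a\<^sup>2 - 1) \<le> 2"
    using norm_triangle_ineq4[of "a\<^sup>2" 1] assms(2) power_le_one[of "norm a" 2] by (simp add: norm_power)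
  then have "norm (a ^ n * (a\<^sup>2 - 1)) \<le> 1 * 2"
    unfolding norm_mult using assms(2) by (intro mult_mono) (auto simp: norm_power power_le_one)
  moreover have "norm (of_nat (n + 1) :: 'a) = real n + 1"
    using norm_of_nat[of "n + 1", where 'a='a] by simp
  moreover have "norm (of_nat (n + 1) :: 'a) - norm (a ^ n * (a\<^sup>2 - 1)) \<le> norm (a * ?Q')"
    unfolding aQ' using norm_triangle_ineq2[of "of_nat (n + 1)" "a ^ n * (a\<^sup>2 - 1)"]
    by (metis norm_minus_commute)
  ultimately have "real n - 1 \<le> norm (a * ?Q')"
    by linarith
  also have "\<dots> \<le> norm ?Q'"
    using assms(2) by (simp add: norm_mult mult_left_le_one_le)
  finally show ?thesis .
qed

lemma Q_roots_separation:
  fixes a b :: "'a::real_normed_field"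
  assumes "Q n a = 0" "Q n b = 0" "norm a \<le> 1" "norm b \<le> 1" "a \<noteq> b" "n \<ge> 1"
  shows "real n - 1 \<le> (5 * real n ^ 2 + 5 * real n + 2) / 2 * norm (b - a)"
proof -
  (* Second-order Taylor expansion of Q n around a: Q' is its derivative at a. *)
  define d where "d = b - a"
  define E where "E m = b ^ m - a ^ m - of_nat m * a ^ (m - 1) * d" for m
  define Q' where "Q' = of_nat (n + 2) * a ^ (n + 1) - 3 * of_nat (n + 1) * a ^ n + of_nat n * a ^ (n - 1)"
  have "Q' * d = - (E (n + 2) - 3 * E (n + 1) + E n) + (Q n b - Q n a)"
    unfolding E_def Q'_def Q_def power2_eq_square by (simp add: algebra_simps)
  then have "norm Q' * norm d = norm (E (n + 2) - 3 * E (n + 1) + E n)"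
    using assms(1,2) by (metis add.right_neutral diff_self norm_minus_cancel norm_mult)
  also have "\<dots> \<le> norm (E (n + 2)) + 3 * norm (E (n + 1)) + norm (E n)"
    using norm_triangle_ineq[of "E (n + 2) - 3 * E (n + 1)" "E n"]
      norm_triangle_ineq4[of "E (n + 2)" "3 * E (n + 1)"] by (simp add: norm_mult)
  also have "\<dots> \<le> real (n + 2) * (real (n + 2) - 1) / 2 * (norm d)\<^sup>2
      + 3 * (real (n + 1) * (real (n + 1) - 1) / 2 * (norm d)\<^sup>2)
      + real n * (real n - 1) / 2 * (norm d)\<^sup>2"
    unfolding E_def d_def using assms(3,4)
    by (intro add_mono mult_left_mono norm_power_taylor_remainder_le) auto
  also have "\<dots> = (5 * real n ^ 2 + 5 * real n + 2) / 2 * norm d * norm d"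
    by (simp add: field_simps power2_eq_square)
  finally have "norm Q' * norm d \<le> (5 * real n ^ 2 + 5 * real n + 2) / 2 * norm d * norm d" .
  moreover have "norm d > 0"
    using assms(5) by (simp add: d_def)
  ultimately have "norm Q' \<le> (5 * real n ^ 2 + 5 * real n + 2) / 2 * norm d"
    by simp
  then show ?thesis
    using Q_deriv_norm_ge[OF assms(1,3,6)] by (simp add: Q'_def d_def)
qed

lemma power_diff_le_mult_diff:
  fixes a b :: real
  assumes "0 \<le> b" "b \<le> a" "a \<le> 1"
  shows "a ^ n - b ^ n \<le> real n * (a - b)"
proof (induction n)
  case (Suc n)
  have "a ^ Suc n - b ^ Suc n = a * (a ^ n - b ^ n) + b ^ n * (a - b)"
    by (simp add: algebra_simps)
  also have "\<dots> \<le> (a ^ n - b ^ n) + 1 * (a - b)"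
    using assms power_mono[of b a n]
    by (intro add_mono mult_right_mono mult_left_le_one_le) (auto simp: power_le_one)
  finally show ?case
    using Suc.IH by (simp add: algebra_simps)
qed simp

lemma Q_roots_qnorm2_diff_le:
  fixes z\<^sub>1 z\<^sub>2 :: complex
  assumes "Q n z\<^sub>1 = 0" "Q n z\<^sub>2 = 0" "cmod z\<^sub>2 \<le> cmod z\<^sub>1" "cmod z\<^sub>1 \<le> 1"
  shows "\<bar>qnorm2 (Re z\<^sub>2) ((cmod z\<^sub>2)\<^sup>2) - qnorm2 (Re z\<^sub>1) ((cmod z\<^sub>1)\<^sup>2)\<bar>
    \<le> 625 * real n * ((cmod z\<^sub>1)\<^sup>2 - (cmod z\<^sub>2)\<^sup>2)"
proof -
  define R\<^sub>1 R\<^sub>2 where "R\<^sub>1 = (cmod z\<^sub>1)\<^sup>2" and "R\<^sub>2 = (cmod z\<^sub>2)\<^sup>2"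
  define A\<^sub>1 A\<^sub>2 where "A\<^sub>1 = qnorm2 (Re z\<^sub>1) R\<^sub>1" and "A\<^sub>2 = qnorm2 (Re z\<^sub>2) R\<^sub>2"
  have R: "0 \<le> R\<^sub>2" "R\<^sub>2 \<le> R\<^sub>1" "R\<^sub>1 \<le> 1"
    using assms(3,4) by (auto simp: R\<^sub>1_def R\<^sub>2_def power_mono power_le_one)
  have A: "0 \<le> A\<^sub>i" "A\<^sub>i \<le> 25" if "A\<^sub>i = qnorm2 (Re z) ((cmod z)\<^sup>2)" "cmod z \<le> 1" for A\<^sub>i z
    using that norm_q_le_5[of z] power_mono[of "cmod (z\<^sup>2 - 3 * z + 1)" 5 2]
    by (simp_all flip: cmod_q_power2)
  have "A\<^sub>2 - A\<^sub>1 = A\<^sub>1 * A\<^sub>2 * (R\<^sub>1 ^ n - R\<^sub>2 ^ n)"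
    using Q_eq_0_qnorm2[OF assms(1)] Q_eq_0_qnorm2[OF assms(2)]
    by (simp add: A\<^sub>1_def A\<^sub>2_def R\<^sub>1_def R\<^sub>2_def algebra_simps)
  also have "\<dots> \<le> (25 * 25) * (real n * (R\<^sub>1 - R\<^sub>2))"
    using A[OF A\<^sub>1_def[unfolded R\<^sub>1_def]] A[OF A\<^sub>2_def[unfolded R\<^sub>2_def]] assms(3,4) R
      power_diff_le_mult_diff[of R\<^sub>2 R\<^sub>1 n] power_mono[of R\<^sub>2 R\<^sub>1 n]
    by (intro mult_mono) auto
  finally have "A\<^sub>2 - A\<^sub>1 \<le> 625 * real n * (R\<^sub>1 - R\<^sub>2)"
    by simp
  moreover have "0 \<le> A\<^sub>2 - A\<^sub>1"
    using \<open>A\<^sub>2 - A\<^sub>1 = _\<close> A[OF A\<^sub>1_def[unfolded R\<^sub>1_def]] A[OF A\<^sub>2_def[unfolded R\<^sub>2_def]] assms(3,4) R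
      power_mono[of R\<^sub>2 R\<^sub>1 n]
    by simp
  ultimately show ?thesis
    by (simp add: A\<^sub>1_def A\<^sub>2_def R\<^sub>1_def R\<^sub>2_def)
qed

lemma Q_roots_Re_diff_le:
  fixes z\<^sub>1 z\<^sub>2 :: complex
  assumes "Q n z\<^sub>1 = 0" "Q n z\<^sub>2 = 0" "cmod z\<^sub>2 \<le> cmod z\<^sub>1" "cmod z\<^sub>1 \<le> 1"
  shows "\<bar>Re z\<^sub>1 - Re z\<^sub>2\<bar> \<le> 480 * real (Suc n) * ((cmod z\<^sub>1)\<^sup>2 - (cmod z\<^sub>2)\<^sup>2)"
proof -
  define x\<^sub>1 x\<^sub>2 where "x\<^sub>1 = Re z\<^sub>1" and "x\<^sub>2 = Re z\<^sub>2"
  define R\<^sub>1 R\<^sub>2 where "R\<^sub>1 = (cmod z\<^sub>1)\<^sup>2" and "R\<^sub>2 = (cmod z\<^sub>2)\<^sup>2"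
  define F where "F = 6 * (R\<^sub>2 + 1) - 4 * (x\<^sub>1 + x\<^sub>2)"
  have x: "\<bar>x\<^sub>1\<bar> \<le> 1" "\<bar>x\<^sub>2\<bar> \<le> cmod z\<^sub>2"
    using abs_Re_le_cmod[of z\<^sub>1] abs_Re_le_cmod[of z\<^sub>2] assms(4) by (auto simp: x\<^sub>1_def x\<^sub>2_def)
  have R: "0 \<le> R\<^sub>2" "R\<^sub>2 \<le> R\<^sub>1" "R\<^sub>1 \<le> 1"
    using assms(3,4) by (auto simp: R\<^sub>1_def R\<^sub>2_def power_mono power_le_one)
  have "4 / 3 \<le> F"
  proof -
    have "4 * cmod z\<^sub>2 - 2 / 3 \<le> 6 * R\<^sub>2"
      using zero_le_power2[of "cmod z\<^sub>2 - 1 / 3"] by (simp add: R\<^sub>2_def power2_eq_square algebra_simps)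
    then show ?thesis
      using x by (simp add: F_def abs_le_iff)
  qed
  define \<delta> where "\<delta> = R\<^sub>1 - R\<^sub>2"
  have "(x\<^sub>1 - x\<^sub>2) * F = (qnorm2 x\<^sub>2 R\<^sub>2 - qnorm2 x\<^sub>1 R\<^sub>1) + \<delta> * (R\<^sub>1 + R\<^sub>2 + 7 - 6 * x\<^sub>1)"
    using qnorm2_diff_Re[of x\<^sub>2 R\<^sub>2 x\<^sub>1] qnorm2_diff_R[of x\<^sub>1 R\<^sub>1 R\<^sub>2] by (simp add: F_def \<delta>_def algebra_simps)
  then have "\<bar>x\<^sub>1 - x\<^sub>2\<bar> * F = \<bar>(qnorm2 x\<^sub>2 R\<^sub>2 - qnorm2 x\<^sub>1 R\<^sub>1) + \<delta> * (R\<^sub>1 + R\<^sub>2 + 7 - 6 * x\<^sub>1)\<bar>"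
    using \<open>4 / 3 \<le> F\<close> by (metis abs_mult abs_of_nonneg dual_order.trans zero_le_divide_iff zero_le_numeral)
  also have "\<dots> \<le> \<bar>qnorm2 x\<^sub>2 R\<^sub>2 - qnorm2 x\<^sub>1 R\<^sub>1\<bar> + \<delta> * \<bar>R\<^sub>1 + R\<^sub>2 + 7 - 6 * x\<^sub>1\<bar>"
    using R abs_triangle_ineq[of "qnorm2 x\<^sub>2 R\<^sub>2 - qnorm2 x\<^sub>1 R\<^sub>1" "\<delta> * (R\<^sub>1 + R\<^sub>2 + 7 - 6 * x\<^sub>1)"]
    by (simp add: \<delta>_def abs_mult)
  also have "\<dots> \<le> 625 * real n * \<delta> + \<delta> * 15"
  proof (intro add_mono mult_left_mono)
    show "\<bar>qnorm2 x\<^sub>2 R\<^sub>2 - qnorm2 x\<^sub>1 R\<^sub>1\<bar> \<le> 625 * real n * \<delta>"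
      using Q_roots_qnorm2_diff_le[OF assms] by (simp add: x\<^sub>1_def x\<^sub>2_def R\<^sub>1_def R\<^sub>2_def \<delta>_def)
    show "\<bar>R\<^sub>1 + R\<^sub>2 + 7 - 6 * x\<^sub>1\<bar> \<le> 15" "0 \<le> \<delta>"
      using R x(1) by (auto simp: \<delta>_def abs_le_iff)
  qed
  also have "\<dots> = (625 * real n + 15) * \<delta>"
    by (simp add: algebra_simps)
  also have "\<dots> \<le> (4 / 3 * 480 * real (Suc n)) * \<delta>"
    using R by (intro mult_right_mono) (auto simp: \<delta>_def)
  finally have "\<bar>x\<^sub>1 - x\<^sub>2\<bar> * F \<le> 4 / 3 * (480 * real (Suc n) * \<delta>)"
    by (simp add: algebra_simps)
  moreover have "\<bar>x\<^sub>1 - x\<^sub>2\<bar> * (4 / 3) \<le> \<bar>x\<^sub>1 - x\<^sub>2\<bar> * F"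
    using \<open>4 / 3 \<le> F\<close> by (intro mult_left_mono) auto
  ultimately show ?thesis
    by (simp add: x\<^sub>1_def x\<^sub>2_def R\<^sub>1_def R\<^sub>2_def \<delta>_def)
qed

lemma norm_diff_power2_le_upper_half:
  fixes w\<^sub>1 w\<^sub>2 :: complex
  assumes "0 \<le> Im w\<^sub>1" "0 \<le> Im w\<^sub>2" "cmod w\<^sub>1 \<le> 1" "cmod w\<^sub>2 \<le> 1"
  shows "(cmod (w\<^sub>1 - w\<^sub>2))\<^sup>2 \<le> \<bar>(cmod w\<^sub>1)\<^sup>2 - (cmod w\<^sub>2)\<^sup>2\<bar> + 4 * \<bar>Re w\<^sub>1 - Re w\<^sub>2\<bar>"
proof -
  define x\<^sub>1 x\<^sub>2 y\<^sub>1 y\<^sub>2 where "x\<^sub>1 = Re w\<^sub>1" and "x\<^sub>2 = Re w\<^sub>2" and "y\<^sub>1 = Im w\<^sub>1" and "y\<^sub>2 = Im w\<^sub>2"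
  have x: "\<bar>x\<^sub>1\<bar> \<le> 1" "\<bar>x\<^sub>2\<bar> \<le> 1"
    using abs_Re_le_cmod[of w\<^sub>1] abs_Re_le_cmod[of w\<^sub>2] assms(3,4) by (auto simp: x\<^sub>1_def x\<^sub>2_def)
  have "\<bar>x\<^sub>1 - x\<^sub>2\<bar> \<le> 2"
    using x abs_triangle_ineq4[of x\<^sub>1 x\<^sub>2] by linarith
  then have "(x\<^sub>1 - x\<^sub>2)\<^sup>2 \<le> 2 * \<bar>x\<^sub>1 - x\<^sub>2\<bar>"
    by (metis abs_ge_zero mult.commute mult_left_mono power2_abs power2_eq_square)
  moreover have "(y\<^sub>1 - y\<^sub>2)\<^sup>2 \<le> \<bar>y\<^sub>1\<^sup>2 - y\<^sub>2\<^sup>2\<bar>"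
  proof -
    have y: "0 \<le> y\<^sub>1" "0 \<le> y\<^sub>2"
      using assms(1,2) by (simp_all add: y\<^sub>1_def y\<^sub>2_def)
    then have "\<bar>y\<^sub>1 - y\<^sub>2\<bar> \<le> y\<^sub>1 + y\<^sub>2"
      by linarith
    then have "(y\<^sub>1 - y\<^sub>2)\<^sup>2 \<le> \<bar>y\<^sub>1 - y\<^sub>2\<bar> * (y\<^sub>1 + y\<^sub>2)"
      by (metis abs_ge_zero mult_left_mono power2_abs power2_eq_square)
    also have "\<dots> = \<bar>(y\<^sub>1 - y\<^sub>2) * (y\<^sub>1 + y\<^sub>2)\<bar>"
      using y by (simp add: abs_mult)
    also have "\<dots> = \<bar>y\<^sub>1\<^sup>2 - y\<^sub>2\<^sup>2\<bar>"
      by (simp add: power2_eq_square algebra_simps)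
    finally show ?thesis .
  qed
  moreover have "y\<^sub>1\<^sup>2 - y\<^sub>2\<^sup>2 = ((cmod w\<^sub>1)\<^sup>2 - (cmod w\<^sub>2)\<^sup>2) - (x\<^sub>1 - x\<^sub>2) * (x\<^sub>1 + x\<^sub>2)"
    using cmod_power2[of w\<^sub>1] cmod_power2[of w\<^sub>2]
    by (simp add: x\<^sub>1_def x\<^sub>2_def y\<^sub>1_def y\<^sub>2_def power2_eq_square algebra_simps)
  moreover have "\<bar>(x\<^sub>1 - x\<^sub>2) * (x\<^sub>1 + x\<^sub>2)\<bar> \<le> \<bar>x\<^sub>1 - x\<^sub>2\<bar> * 2"
    unfolding abs_mult using x by (intro mult_left_mono) auto
  moreover have "(cmod (w\<^sub>1 - w\<^sub>2))\<^sup>2 = (x\<^sub>1 - x\<^sub>2)\<^sup>2 + (y\<^sub>1 - y\<^sub>2)\<^sup>2"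
    by (simp add: x\<^sub>1_def x\<^sub>2_def y\<^sub>1_def y\<^sub>2_def cmod_power2)
  ultimately show ?thesis
    unfolding x\<^sub>1_def x\<^sub>2_def by linarith
qed

lemma power2_diff_le_of_ratio:
  fixes r\<^sub>1 r\<^sub>2 \<eta> :: real
  assumes "0 < r\<^sub>2" "r\<^sub>2 \<le> r\<^sub>1" "r\<^sub>1 \<le> 1" "r\<^sub>1 / r\<^sub>2 \<le> 1 + \<eta>" "0 \<le> \<eta>" "\<eta> \<le> 1"
  shows "r\<^sub>1\<^sup>2 - r\<^sub>2\<^sup>2 \<le> 3 * \<eta>"
proof -
  have "r\<^sub>1 \<le> (1 + \<eta>) * r\<^sub>2"
    using assms(1,4) by (simp add: divide_le_eq)
  then have "r\<^sub>1\<^sup>2 \<le> (1 + \<eta>)\<^sup>2 * r\<^sub>2\<^sup>2"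
    using assms(1,2) by (metis power_mono power_mult_distrib order_trans less_imp_le)
  moreover have "\<eta> * \<eta> \<le> \<eta>"
    using assms(5,6) by (simp add: mult_left_le)
  then have "(2 * \<eta> + \<eta> * \<eta>) * r\<^sub>2\<^sup>2 \<le> 3 * \<eta> * 1"
    using assms power_le_one[of r\<^sub>2 2] by (intro mult_mono) auto
  ultimately show ?thesis
    by (simp add: power2_eq_square algebra_simps)
qed

lemma linear_less_power_1_59: "m \<ge> 64 \<Longrightarrow> 150000 * real m < 1.59 ^ m"
proof (induction m rule: dec_induct)
  case base
  have "(40::real) ^ 8 \<le> (1.59 ^ 8) ^ 8"
    by (rule power_mono) (simp_all add: power_divide)
  then show ?case
    by (simp flip: power_mult)
next
  case (step m)
  then have "150000 * real (Suc m) \<le> 150000 * real m * 1.59"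
    by simp
  also have "\<dots> < 1.59 ^ Suc m"
    using step.IH by simp
  finally show ?case .
qed

lemma cube_less_power_1_59: "k \<ge> 4 \<Longrightarrow> 150000 * real k ^ 3 < 1.59 ^ (k ^ 3)"
  using linear_less_power_1_59[of "k ^ 3"] power_mono[of 4 k 3] by simp

lemma Q_roots_upper_half_dist_le:
  fixes w\<^sub>1 w\<^sub>2 :: complex
  assumes "Q n w\<^sub>1 = 0" "Q n w\<^sub>2 = 0" "0 \<le> Im w\<^sub>1" "0 \<le> Im w\<^sub>2" "cmod w\<^sub>2 \<le> cmod w\<^sub>1" "cmod w\<^sub>1 \<le> 1"
  shows "(cmod (w\<^sub>1 - w\<^sub>2))\<^sup>2 \<le> 2000 * real (Suc n) * ((cmod w\<^sub>1)\<^sup>2 - (cmod w\<^sub>2)\<^sup>2)"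
proof -
  define \<delta> where "\<delta> = (cmod w\<^sub>1)\<^sup>2 - (cmod w\<^sub>2)\<^sup>2"
  have "0 \<le> \<delta>"
    using assms(5) by (simp add: \<delta>_def power_mono)
  have "(cmod (w\<^sub>1 - w\<^sub>2))\<^sup>2 \<le> \<delta> + 4 * \<bar>Re w\<^sub>1 - Re w\<^sub>2\<bar>"
    using norm_diff_power2_le_upper_half[of w\<^sub>1 w\<^sub>2] assms(3-6) \<open>0 \<le> \<delta>\<close> by (simp add: \<delta>_def)
  also have "\<dots> \<le> \<delta> + 4 * (480 * real (Suc n) * \<delta>)"
    using Q_roots_Re_diff_le[OF assms(1,2,5,6)] by (simp add: \<delta>_def)
  also have "\<dots> = (1 + 1920 * real (Suc n)) * \<delta>"
    by (simp add: algebra_simps)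
  also have "\<dots> \<le> (2000 * real (Suc n)) * \<delta>"
    using \<open>0 \<le> \<delta>\<close> by (intro mult_right_mono) auto
  finally show ?thesis
    by (simp add: \<delta>_def)
qed

lemma Q_roots_dist_ge:
  fixes a b :: complex
  assumes "n \<ge> 3" "Q n a = 0" "Q n b = 0" "cmod a \<le> 1" "cmod b \<le> 1" "a \<noteq> b"
  shows "1 \<le> 5 * real (Suc n) * cmod (b - a)"
proof -
  define K where "K = real (Suc n)"
  have "K / 2 \<le> real n - 1"
    using assms(1) by (simp add: K_def field_simps)
  also have "\<dots> \<le> (5 * real n ^ 2 + 5 * real n + 2) / 2 * cmod (b - a)"
    using Q_roots_separation[OF assms(2-6)] assms(1) by simp
  also have "\<dots> \<le> 5 * K\<^sup>2 / 2 * cmod (b - a)"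
    by (intro mult_right_mono) (simp_all add: K_def power2_eq_square algebra_simps)
  finally have "K * 1 \<le> K * (5 * K * cmod (b - a))"
    by (simp add: power2_eq_square algebra_simps)
  then show ?thesis
    by (simp add: K_def)
qed

lemma Q_roots_norm_ratio_gap:
  fixes z\<^sub>1 z\<^sub>2 :: complex
  assumes "n \<ge> 3" "Q n z\<^sub>1 = 0" "Q n z\<^sub>2 = 0" "cmod z\<^sub>2 < cmod z\<^sub>1" "cmod z\<^sub>1 < 1"
  shows "cmod z\<^sub>1 / cmod z\<^sub>2 > 1 + 1.59 powr (- (real (Suc n) ^ 3))"
proof (rule ccontr)
  define K where "K = real (Suc n)"
  define \<eta> where "\<eta> = (1.59::real) powr (- (K ^ 3))"
  assume "\<not> ?thesis"
  then have ratio: "cmod z\<^sub>1 / cmod z\<^sub>2 \<le> 1 + \<eta>"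
    by (simp add: \<eta>_def K_def)
  have "(1.59::real) powr (K ^ 3) = 1.59 ^ (Suc n ^ 3)"
    unfolding K_def of_nat_power[symmetric] by (rule powr_realpow) simp
  then have \<eta>: "\<eta> = 1 / 1.59 ^ (Suc n ^ 3)"
    by (simp add: \<eta>_def powr_minus inverse_eq_divide)
  have "150000 * K ^ 3 < 1.59 ^ (Suc n ^ 3)"
    using cube_less_power_1_59[of "Suc n"] assms(1) by (simp add: K_def)
  then have small: "150000 * K ^ 3 * \<eta> < 1"
    unfolding \<eta> by (simp add: divide_less_eq)
  have "0 < \<eta>" "\<eta> \<le> 1"
    using one_le_power[of "1.59::real" "Suc n ^ 3"] unfolding \<eta> by simp_all
  have "0 < cmod z\<^sub>2"
    using Q_eq_0_nonzero[OF assms(3)] by simp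
  then have \<delta>: "(cmod z\<^sub>1)\<^sup>2 - (cmod z\<^sub>2)\<^sup>2 \<le> 3 * \<eta>"
    using power2_diff_le_of_ratio[OF _ _ _ ratio] assms(4,5) \<open>0 < \<eta>\<close> \<open>\<eta> \<le> 1\<close> by simp
  (* Conjugation preserves roots and moduli, so both roots may be taken in the upper half plane. *)
  obtain w\<^sub>1 w\<^sub>2 where "w\<^sub>1 = z\<^sub>1 \<or> w\<^sub>1 = cnj z\<^sub>1" "w\<^sub>2 = z\<^sub>2 \<or> w\<^sub>2 = cnj z\<^sub>2"
    and w: "0 \<le> Im w\<^sub>1" "0 \<le> Im w\<^sub>2"
    by (metis cnj.sel(2) linorder_linear neg_0_le_iff_le)
  then have w_props: "Q n w\<^sub>1 = 0" "Q n w\<^sub>2 = 0" "cmod w\<^sub>1 = cmod z\<^sub>1" "cmod w\<^sub>2 = cmod z\<^sub>2"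
    using assms(2,3) by (auto simp: Q_cnj)
  have "(cmod (w\<^sub>1 - w\<^sub>2))\<^sup>2 \<le> 2000 * K * ((cmod z\<^sub>1)\<^sup>2 - (cmod z\<^sub>2)\<^sup>2)"
    using Q_roots_upper_half_dist_le[of n w\<^sub>1 w\<^sub>2] w w_props assms(4,5) by (simp add: K_def)
  also have "\<dots> \<le> 2000 * K * (3 * \<eta>)"
    using \<delta> by (intro mult_left_mono) (simp_all add: K_def)
  finally have close: "(cmod (w\<^sub>1 - w\<^sub>2))\<^sup>2 \<le> 6000 * K * \<eta>"
    by simp
  have "1 \<le> 5 * K * cmod (w\<^sub>1 - w\<^sub>2)"
    using Q_roots_dist_ge[of n w\<^sub>2 w\<^sub>1] w_props assms by (fastforce simp: K_def)
  then have "1 \<le> 25 * K\<^sup>2 * (cmod (w\<^sub>1 - w\<^sub>2))\<^sup>2"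
    using power_mono[of 1 "5 * K * cmod (w\<^sub>1 - w\<^sub>2)" 2] by (simp add: power_mult_distrib)
  also have "\<dots> \<le> 25 * K\<^sup>2 * (6000 * K * \<eta>)"
    using close by (intro mult_left_mono) auto
  also have "\<dots> = 150000 * K ^ 3 * \<eta>"
    by (simp add: power2_eq_square power3_eq_cube)
  finally show False
    using small by simp
qed

section \<open>The dominant root\<close>

locale Psi_dominant_root =
  fixes n :: nat and \<gamma> :: real
  assumes n_ge_1: "n \<ge> 1" and gamma_gt_1: "\<gamma> > 1" and psi_gamma: "psi (Suc n) \<gamma> = 0"
begin

lemma Q_gamma: "Q n \<gamma> = 0"
  using psi_Suc_mult[of \<gamma> n] psi_gamma by simp

lemma gamma_gt_2: "\<gamma> > 2"
proof -
  have "psi (Suc n) (2::real) = 1 - 2 ^ n"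
    using psi_Suc_mult[of "2::real" n] by (simp add: Q_def)
  moreover have "(2::real) ^ n \<ge> 2 ^ 1"
    using n_ge_1 by (intro power_increasing) auto
  ultimately show ?thesis
    using psi_Suc_less_0_iff[OF psi_gamma, of 2] gamma_gt_1 by simp
qed

lemma gamma_less_2_6181: "\<gamma> < 2.6181"
proof -
  have "\<gamma> ^ n * (\<gamma>\<^sup>2 - 3 * \<gamma> + 1) = -1"
    using Q_gamma by (simp add: Q_def eq_neg_iff_add_eq_0)
  moreover have "0 < \<gamma> ^ n"
    using gamma_gt_1 by simp
  ultimately have "\<gamma>\<^sup>2 - 3 * \<gamma> + 1 < 0"
    using mult_nonneg_nonneg[of "\<gamma> ^ n" "\<gamma>\<^sup>2 - 3 * \<gamma> + 1"] by fastforce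
  then have "(\<gamma> - 1.5)\<^sup>2 < 1.25"
    by (simp add: power2_eq_square algebra_simps)
  moreover have "1.25 < (2.6181 - 1.5 :: real)\<^sup>2"
    by (simp add: power2_eq_square)
  moreover have "(2.6181 - 1.5 :: real)\<^sup>2 \<le> (\<gamma> - 1.5)\<^sup>2" if "\<not> \<gamma> < 2.6181"
    using that by (intro power_mono) auto
  ultimately show ?thesis
    by fastforce
qed

lemma norm_root_less_1:
  fixes z :: complex
  assumes "psi (Suc n) z = 0" "z \<noteq> of_real \<gamma>"
  shows "cmod z < 1"
proof -
  have Qz: "Q n z = 0" and "z \<noteq> 1"
    using assms(1) psi_Suc_eq_0_iff by blast+
  have r: "0 < cmod z"
    using Q_eq_0_nonzero[OF Qz] by simp
  have "cmod z \<le> \<gamma>"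
    using psi_Suc_le_0_iff[OF psi_gamma _ r] psi_Suc_norm_root_le_0[OF assms(1)] gamma_gt_1 by simp
  moreover have "cmod z \<noteq> \<gamma>"
  proof
    assume "cmod z = \<gamma>"
    then have "z = of_real \<gamma> \<or> z = cnj (of_real \<gamma>)"
      using Q_eq_0_same_norm[of n "of_real \<gamma>" z] Q_gamma Qz gamma_gt_1 by (simp add: Q_of_real)
    then show False
      using assms(2) by auto
  qed
  ultimately have "psi (Suc n) (cmod z) < 0"
    using psi_Suc_less_0_iff[OF psi_gamma _ r] gamma_gt_1 by simp
  moreover have "0 \<le> (cmod z - 1) * psi (Suc n) (cmod z)"
    using Q_norm_root_ge_0[OF Qz] psi_Suc_mult[of "cmod z" n] by simp
  ultimately have "cmod z \<le> 1"
    by (simp add: zero_le_mult_iff)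
  moreover have "cmod z \<noteq> 1"
  proof
    assume "cmod z = 1"
    then have "z = 1 \<or> z = cnj 1"
      using Q_eq_0_same_norm[of n 1 z] Qz by (simp add: Q_def)
    then show False
      using \<open>z \<noteq> 1\<close> by simp
  qed
  ultimately show ?thesis
    by simp
qed

lemma g_gamma_bounds: "0.276 \<le> g (Suc n) \<gamma> \<and> g (Suc n) \<gamma> \<le> 0.5"
proof -
  define c where "c = real (Suc n) / \<gamma> ^ n"
  have "real (Suc n) \<le> 2 ^ n"
    using less_exp[of n] by (metis Suc_leI of_nat_le_iff of_nat_numeral of_nat_power)
  also have "(2::real) ^ n \<le> \<gamma> ^ n"
    using gamma_gt_2 by (intro power_mono) auto
  finally have c: "0 < c" "c \<le> 1"
    using gamma_gt_1 by (simp_all add: c_def)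
  have "\<gamma> ^ n * (\<gamma>\<^sup>2 - 3 * \<gamma> + 1) = -1"
    using Q_gamma by (simp add: Q_def eq_neg_iff_add_eq_0)
  moreover have "\<gamma> ^ n \<noteq> 0"
    using gamma_gt_1 by simp
  ultimately have "\<gamma>\<^sup>2 - 3 * \<gamma> + 1 = -1 / \<gamma> ^ n"
    by (simp add: field_simps)
  then have "real (Suc n) * (\<gamma>\<^sup>2 - 3 * \<gamma> + 1) = - c"
    by (simp add: c_def)
  then have g: "g (Suc n) \<gamma> = (\<gamma> - 1) / (\<gamma>\<^sup>2 - 1 - c)"
    by (simp add: g_eq)
  have "1 \<le> (\<gamma> - 1)\<^sup>2"
    using gamma_gt_2 power_mono[of 1 "\<gamma> - 1" 2] by simp
  then have upper: "2 * (\<gamma> - 1) \<le> \<gamma>\<^sup>2 - 1 - c"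
    using c by (simp add: power2_eq_square algebra_simps)
  have "69 / 250 * (\<gamma> + 1) * (\<gamma> - 1) \<le> 1 * (\<gamma> - 1)"
    using gamma_less_2_6181 gamma_gt_1 by (intro mult_right_mono) auto
  then have "69 / 250 * (\<gamma>\<^sup>2 - 1) \<le> \<gamma> - 1"
    by (simp add: power2_eq_square algebra_simps)
  then have lower: "69 / 250 * (\<gamma>\<^sup>2 - 1 - c) \<le> \<gamma> - 1"
    using c by (simp add: field_simps)
  have "0 < \<gamma>\<^sup>2 - 1 - c"
    using upper gamma_gt_2 by (simp add: algebra_simps)
  then show ?thesis
    using upper lower unfolding g by (simp add: divide_le_eq le_divide_eq)
qed

lemma norm_power2_inner_root_Psi_3:
  fixes z :: complex
  assumes "n = 2" "psi (Suc n) z = 0" "z \<noteq> of_real \<gamma>"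
  shows "(cmod z)\<^sup>2 = 1 / \<gamma>"
proof -
  have z: "psi 3 z = 0"
    using assms(1,2) by simp
  have "Im z \<noteq> 0"
  proof
    assume "Im z = 0"
    then have "z = of_real (Re z)"
      by (simp add: complex_eq_iff)
    then have "psi 3 (Re z) = 0"
      using z by (metis of_real_eq_0_iff psi_of_real)
    moreover have "\<bar>Re z\<bar> < 1"
      using abs_Re_le_cmod[of z] norm_root_less_1[OF assms(2,3)] by linarith
    ultimately show False
      using psi_3_no_root_in_unit_interval by blast
  qed
  then have "\<gamma> * (cmod z)\<^sup>2 = 1"
    using psi_3_nonreal_root_norm[OF z] psi_gamma assms(1) by simp
  then show ?thesis
    using gamma_gt_1 by (simp add: field_simps)
qed

lemma norm_g_root_less:
  fixes z :: complex
  assumes "psi (Suc n) z = 0" "z \<noteq> of_real \<gamma>"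
  shows "cmod (g (Suc n) z) < (if Suc n = 2 then 1 else min 1 (2 / (real (Suc n) - 2)))"
proof -
  have z1: "cmod z < 1"
    using norm_root_less_1[OF assms] .
  have Qz: "Q n z = 0"
    using assms(1) psi_Suc_eq_0_iff by blast
  define D where "D = of_nat (Suc n) * (z\<^sup>2 - 3 * z + 1) + (z\<^sup>2 - 1)"
  note D = g_denominator_bounds[OF Qz z1, folded D_def]
  have g: "cmod (g (Suc n) z) = cmod (z - 1) / cmod D"
    by (simp add: g_eq D_def norm_divide)
  have z1': "cmod (z - 1) < 2"
    using z1 norm_triangle_ineq4[of z 1] by simp
  consider "n = 1" | "n = 2" | "n \<ge> 3"
    using n_ge_1 by linarith
  then show ?thesis
  proof cases
    case 1
    then have "D = 3 * psi (Suc n) z + 4"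
      by (simp add: D_def psi_def algebra_simps power2_eq_square)
    then show ?thesis
      using assms(1) g z1' 1 by simp
  next
    case 2
    then have "real (Suc n) / cmod z ^ n = 3 * \<gamma>"
      using norm_power2_inner_root_Psi_3[OF 2 assms] gamma_gt_1 by simp
    then have "4 < cmod D"
      using D(1) gamma_gt_2 by linarith
    then show ?thesis
      using g z1' 2 by (simp add: divide_less_eq)
  next
    case 3
    then have K: "2 \<le> real (Suc n) - 2"
      by simp
    then have "cmod (z - 1) / cmod D < 2 / (real (Suc n) - 2)"
      using D(2) z1' by (intro frac_less) auto
    moreover have "2 / (real (Suc n) - 2) \<le> 1"
      using K by simp
    ultimately show ?thesis
      using g 3 by simp
  qed
qed

lemma gamma_mult_min_root_le:
  fixes z\<^sub>0 :: complex
  assumes "psi (Suc n) z\<^sub>0 = 0" "\<And>z. psi (Suc n) z = 0 \<Longrightarrow> cmod z\<^sub>0 \<le> cmod z"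
  shows "\<gamma> * cmod z\<^sub>0 ^ n \<le> 1"
proof -
  define P where "P = proots (Psi (Suc n))"
  have "Psi (Suc n) \<noteq> 0"
    using lead_coeff_Psi[of n] by auto
  then have roots: "x \<in># P \<longleftrightarrow> psi (Suc n) x = 0" for x
    by (simp add: P_def poly_Psi)
  moreover have "psi (Suc n) (complex_of_real \<gamma>) = 0"
    by (simp add: psi_of_real psi_gamma)
  ultimately obtain P' where P: "P = add_mset (of_real \<gamma>) P'"
    by (metis multi_member_split)
  have "size P' = n"
    using size_proots_complex[of "Psi (Suc n)"] by (simp add: P_def[symmetric] P degree_Psi)
  have "- psi (Suc n) (0::complex) = 1"
    using psi_Suc_mult[of 0 n] n_ge_1 by (simp add: Q_def power_0_left)
  then have "psi (Suc n) (0::complex) = -1"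
    by (simp add: minus_equation_iff)
  then have "(\<Prod>x\<in>#P. cmod x) = 1"
    using norm_poly_0_eq_prod_proots[of "Psi (Suc n)"] by (simp add: P_def poly_Psi lead_coeff_Psi)
  then have "\<gamma> * (\<Prod>x\<in>#P'. cmod x) = 1"
    using gamma_gt_1 by (simp add: P)
  moreover have "cmod z\<^sub>0 \<le> cmod x" if "x \<in># P'" for x
    using that roots[of x] assms(2) by (simp add: P)
  then have "cmod z\<^sub>0 ^ n \<le> (\<Prod>x\<in>#P'. cmod x)"
    using power_size_le_prod_mset[of P' "cmod z\<^sub>0" cmod] \<open>size P' = n\<close> by simp
  ultimately show ?thesis
    using mult_left_mono[of "cmod z\<^sub>0 ^ n" "\<Prod>x\<in>#P'. cmod x" \<gamma>] gamma_gt_1 by simp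
qed

lemma ln_gamma_bounds: "0 < ln \<gamma>" "ln \<gamma> < 1"
proof -
  have "\<gamma> < exp 1"
    using gamma_less_2_6181 exp_1_gt by linarith
  then have "ln \<gamma> < ln (exp 1)"
    using gamma_gt_1 by (subst ln_less_cancel_iff) auto
  then show "0 < ln \<gamma>" "ln \<gamma> < 1"
    using gamma_gt_1 by simp_all
qed

lemma norm_min_root_less:
  fixes z\<^sub>0 :: complex
  assumes "psi (Suc n) z\<^sub>0 = 0" "\<And>z. psi (Suc n) z = 0 \<Longrightarrow> cmod z\<^sub>0 \<le> cmod z"
  shows "cmod z\<^sub>0 < 1 - ln \<gamma> / (2 * real (Suc n))"
proof -
  define t where "t = ln \<gamma> / real n"
  have z0: "0 < cmod z\<^sub>0"
    using assms(1) Q_eq_0_nonzero psi_Suc_eq_0_iff by fastforce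
  have n: "1 \<le> real n"
    using n_ge_1 by simp
  have t: "0 < t" "t < 1"
    using ln_gamma_bounds n by (auto simp: t_def divide_less_eq)
  have "ln \<gamma> + real n * ln (cmod z\<^sub>0) = ln (\<gamma> * cmod z\<^sub>0 ^ n)"
    using gamma_gt_1 z0 by (simp add: ln_mult ln_realpow)
  also have "\<dots> \<le> 0"
    using gamma_mult_min_root_le[OF assms] gamma_gt_1 z0 by simp
  finally have "ln (cmod z\<^sub>0) \<le> - t"
    using n by (simp add: t_def field_simps)
  then have "cmod z\<^sub>0 \<le> exp (- t)"
    using z0 by (metis exp_le_cancel_iff exp_ln)
  also have "\<dots> < 1 - t / 2"
    using t by (rule exp_minus_less_one_minus_half)
  also have "\<dots> \<le> 1 - ln \<gamma> / (2 * real (Suc n))"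
    using ln_gamma_bounds n by (simp add: t_def divide_left_mono)
  finally show ?thesis .
qed

lemma norm_g_min_root_greater:
  fixes z\<^sub>0 :: complex
  assumes "psi (Suc n) z\<^sub>0 = 0" "\<And>z. psi (Suc n) z = 0 \<Longrightarrow> cmod z\<^sub>0 \<le> cmod z"
  shows "ln \<gamma> / (2 * real (Suc n) * (5 * real (Suc n) + 2)) < cmod (g (Suc n) z\<^sub>0)"
proof -
  define K where "K = real (Suc n)"
  have lower: "ln \<gamma> / (2 * K) < 1 - cmod z\<^sub>0"
    using norm_min_root_less[OF assms] by (simp add: K_def)
  moreover have "0 < ln \<gamma> / (2 * K)"
    using ln_gamma_bounds by (simp add: K_def)
  ultimately have z1: "cmod z\<^sub>0 < 1"
    by linarith
  have Qz: "Q n z\<^sub>0 = 0"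
    using assms(1) psi_Suc_eq_0_iff by blast
  define D where "D = of_nat (Suc n) * (z\<^sub>0\<^sup>2 - 3 * z\<^sub>0 + 1) + (z\<^sub>0\<^sup>2 - 1)"
  note D = g_denominator_bounds[OF Qz z1, folded D_def]
  have "0 \<le> real n - 1"
    using n_ge_1 by simp
  then have "0 < cmod D"
    using D(2) by linarith
  have "ln \<gamma> / (2 * K) < cmod (z\<^sub>0 - 1)"
    using lower norm_triangle_ineq2[of 1 z\<^sub>0] by (simp add: norm_minus_commute)
  then have "ln \<gamma> / (2 * K) / (5 * K + 2) < cmod (z\<^sub>0 - 1) / cmod D"
    using D(3) \<open>0 < cmod D\<close> \<open>0 < ln \<gamma> / (2 * K)\<close> by (intro frac_less) (auto simp: K_def)
  then show ?thesis
    by (simp add: g_eq D_def K_def norm_divide)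
qed

lemma inner_roots_norm_ratio_gap:
  fixes z\<^sub>1 z\<^sub>2 :: complex
  assumes "psi (Suc n) z\<^sub>1 = 0" "psi (Suc n) z\<^sub>2 = 0" "cmod z\<^sub>2 < cmod z\<^sub>1" "cmod z\<^sub>1 < 1"
  shows "cmod z\<^sub>1 / cmod z\<^sub>2 > 1 + 1.59 powr (- (real (Suc n) ^ 3))"
proof -
  consider "n = 1" | "n = 2" | "n \<ge> 3"
    using n_ge_1 by linarith
  then show ?thesis
  proof cases
    case 1
    have "z\<^sub>1\<^sup>2 - 2 * z\<^sub>1 - 1 = 0" "z\<^sub>2\<^sup>2 - 2 * z\<^sub>2 - 1 = 0"
      using assms(1,2) 1 by (simp_all add: psi_def numeral_2_eq_2)
    then have "(z\<^sub>1 - z\<^sub>2) * (z\<^sub>1 + z\<^sub>2 - 2) = 0"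
      by (simp add: algebra_simps power2_eq_square)
    moreover have "z\<^sub>1 \<noteq> z\<^sub>2"
      using assms(3) by auto
    ultimately have "z\<^sub>1 + z\<^sub>2 = 2"
      by simp
    moreover have "cmod (z\<^sub>1 + z\<^sub>2) < 2"
      using norm_triangle_ineq[of z\<^sub>1 z\<^sub>2] assms(3,4) by linarith
    ultimately show ?thesis
      by simp
  next
    case 2
    have "z\<^sub>1 \<noteq> of_real \<gamma>" "z\<^sub>2 \<noteq> of_real \<gamma>"
      using assms(3,4) gamma_gt_1 by auto
    then have "(cmod z\<^sub>1)\<^sup>2 = (cmod z\<^sub>2)\<^sup>2"
      using norm_power2_inner_root_Psi_3[OF 2 assms(1)] norm_power2_inner_root_Psi_3[OF 2 assms(2)] by simp
    then show ?thesis
      using assms(3) by (simp add: power2_eq_iff_nonneg)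
  next
    case 3
    moreover have "Q n z\<^sub>1 = 0" "Q n z\<^sub>2 = 0"
      using assms(1,2) psi_Suc_eq_0_iff by blast+
    ultimately show ?thesis
      using Q_roots_norm_ratio_gap assms(3,4) by blast
  qed
qed

lemma root_norm_ratio_gap:
  fixes z\<^sub>1 z\<^sub>2 :: complex
  assumes "psi (Suc n) z\<^sub>1 = 0" "psi (Suc n) z\<^sub>2 = 0" "cmod z\<^sub>2 < cmod z\<^sub>1"
  shows "cmod z\<^sub>1 / cmod z\<^sub>2 > 1 + 1.59 powr (- (real (Suc n) ^ 3))"
proof -
  have z2: "0 < cmod z\<^sub>2"
    using assms(2) Q_eq_0_nonzero psi_Suc_eq_0_iff by fastforce
  have z2_lt_1: "cmod z\<^sub>2 < 1"
  proof (rule ccontr)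
    assume "\<not> cmod z\<^sub>2 < 1"
    then have "\<gamma> < cmod z\<^sub>1"
      using norm_root_less_1[OF assms(2)] assms(3) gamma_gt_1 by force
    then show False
      using norm_root_less_1[OF assms(1)] gamma_gt_1 by force
  qed
  consider "z\<^sub>1 = of_real \<gamma>" | "cmod z\<^sub>1 < 1"
    using norm_root_less_1[OF assms(1)] by blast
  then show ?thesis
  proof cases
    case 1
    have "cmod z\<^sub>1 * cmod z\<^sub>2 < cmod z\<^sub>1 * 1"
      using z2_lt_1 assms(3) z2 by (intro mult_strict_left_mono) auto
    then have "\<gamma> < cmod z\<^sub>1 / cmod z\<^sub>2"
      using 1 z2 gamma_gt_1 by (simp add: less_divide_eq)
    moreover have "1.59 powr (- (real (Suc n) ^ 3)) \<le> (1::real)"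
      by (simp add: powr_minus inverse_le_1_iff ge_one_powr_ge_zero)
    ultimately show ?thesis
      using gamma_gt_2 by linarith
  next
    case 2
    then show ?thesis
      using inner_roots_norm_ratio_gap assms by blast
  qed
qed

end

theorem lemma3p1:
  fixes k :: nat and \<gamma> :: real
  assumes hk: "k \<ge> 2"
    and h\<gamma>root: "poly (Psi k) (complex_of_real \<gamma>) = 0"
    and h\<gamma>1: "\<gamma> > 1"
  shows
    "(\<forall>zi zj. poly (Psi k) zi = 0 \<longrightarrow> poly (Psi k) zj = 0 \<longrightarrow> norm zi > norm zj \<longrightarrow>
        norm zi / norm zj > 1 + 1.59 powr (- (real k ^ 3)))
     \<and> (0.276 \<le> g k \<gamma> \<and> g k \<gamma> \<le> 0.5)
     \<and> (\<forall>z. poly (Psi k) z = 0 \<longrightarrow> z \<noteq> complex_of_real \<gamma> \<longrightarrow>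
        norm (g k z) < (if k = 2 then 1 else min 1 (2 / (real k - 2))))
     \<and> (\<forall>zk. poly (Psi k) zk = 0 \<longrightarrow> (\<forall>z. poly (Psi k) z = 0 \<longrightarrow> norm zk \<le> norm z) \<longrightarrow>
        norm zk < 1 - ln \<gamma> / (2 * real k) \<and>
        norm (g k zk) > ln \<gamma> / (2 * real k * (5 * real k + 2)))
     \<and> (\<forall>zi zj. poly (Psi k) zi = 0 \<longrightarrow> poly (Psi k) zj = 0 \<longrightarrow> zi \<noteq> zj \<longrightarrow>
        norm zi = norm zj \<longrightarrow> zj = cnj zi)"
proof -
  obtain n where k: "k = Suc n" and n: "n \<ge> 1"
    using hk by (cases k) auto
  have "psi (Suc n) \<gamma> = 0"
    using h\<gamma>root by (simp add: k poly_Psi psi_of_real)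
  then interpret Psi_dominant_root n \<gamma>
    using n h\<gamma>1 by unfold_locales
  show ?thesis
    unfolding k poly_Psi
    using root_norm_ratio_gap g_gamma_bounds norm_g_root_less norm_min_root_less norm_g_min_root_greater
      psi_Suc_roots_same_norm
    by blast
qed

end
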